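(* Let $\epsilon>0$, $\delta\ge0$, $n\ge1$, let $\mathscr X$ be any set, and let $T:\mathscr X^n\to\mathbb{Z}$ satisfy $\sup|T(X)-T(X')|=1$, where the supremum is over all pairs $(X,X')\in\mathscr X^n\times\mathscr X^n$ with Hamming distance $\delta(X,X')=1$. Then the set of distributions $\big\{\mathrm{Tulap}\big(T(X),b=e^{-\epsilon},\tfrac{2\delta b}{1-b+2\delta b}\big)\ \big|\ X\in\mathscr X^n\big\}$ satisfies $(\epsilon,\delta)$-differential privacy.
   Context: The Hamming distance on $\mathscr X^n$ is $\delta(X,X')=\#\{i: X_i\ne X'_i\}$. A family $\{P_X: X\in\mathscr X^n\}$ of probability measures on a measurable space $(\mathscr Y,\mathscr F)$ satisfies $(\epsilon,\delta)$-differential privacy if for every $B\in\mathscr F$ and all $X,X'\in\mathscr X^n$ with $\delta(X,X')=1$, $P_X(B)\le e^\epsilon P_{X'}(B)+\delta$. Nearest integer function: $[t]$ is the integer nearest to $t$, with $[z+1/2]$ ($z\in\mathbb{Z}$) defined as the nearest even integer. Tulap distribution: for $m\in\mathbb{R}$, $b\in(0,1)$, $q\in[0,1)$, $N_0\sim\mathrm{Tulap}(m,b,0)$ has cdf $F_{N_0}(x)=\frac{b^{-[x-m]}}{1+b}\big(b+(x-m-[x-m]+\tfrac12)(1-b)\big)$ for $x\leq [m]$ and $F_{N_0}(x)=1-\frac{b^{[x-m]}}{1+b}\big(b+([x-m]-(x-m)+\tfrac12)(1-b)\big)$ for $x>[m]$; and $N\sim \mathrm{Tulap}(m,b,q)$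 has cdf $F_N(x)=\frac{F_{N_0}(x)-q/2}{1-q}\,I\{q/2\leq F_{N_0}(x)\leq 1-q/2\}+I\{F_{N_0}(x)>1-q/2\}$. *)

theory Defs
  imports "HOL-Analysis.Analysis"
begin

definition nearest_int :: "real \<Rightarrow> int" where
  "nearest_int t =
     (if t - of_int \<lfloor>t\<rfloor> = 1/2
      then (if even \<lfloor>t\<rfloor> then \<lfloor>t\<rfloor> else \<lfloor>t\<rfloor> + 1)
      else round t)"

definition tulap0_cdf :: "real \<Rightarrow> real \<Rightarrow> real \<Rightarrow> real" where
  "tulap0_cdf m b x =
     (if x \<le> of_int (nearest_int m)
      then b powi (- nearest_int (x - m)) / (1 + b)
             * (b + (x - m - of_int (nearest_int (x - m)) + 1/2) * (1 - b))
      else 1 - b powi (nearest_int (x - m)) / (1 + b)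
             * (b + (of_int (nearest_int (x - m)) - (x - m) + 1/2) * (1 - b)))"

definition tulap_cdf :: "real \<Rightarrow> real \<Rightarrow> real \<Rightarrow> real \<Rightarrow> real" where
  "tulap_cdf m b q x =
     (let F0 = tulap0_cdf m b x in
      (F0 - q/2) / (1 - q) * (if q/2 \<le> F0 \<and> F0 \<le> 1 - q/2 then 1 else 0)
      + (if F0 > 1 - q/2 then 1 else 0))"

definition Tulap :: "real \<Rightarrow> real \<Rightarrow> real \<Rightarrow> real measure" where
  "Tulap m b q = interval_measure (tulap_cdf m b q)"

definition hamming :: "'x list \<Rightarrow> 'x list \<Rightarrow> nat" where
  "hamming X X' = card {i. i < length X \<and> i < length X' \<and> X ! i \<noteq> X' ! i}"

definition differentially_private ::
  "nat \<Rightarrow> ('x list \<Rightarrow> 'y measure) \<Rightarrow> real \<Rightarrow> real \<Rightarrow> bool" where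
  "differentially_private n P \<epsilon> \<delta> \<longleftrightarrow>
     (\<forall>X X' B. length X = n \<and> length X' = n \<and> hamming X X' = 1 \<and> B \<in> sets (P X) \<longrightarrow>
        measure (P X) B \<le> exp \<epsilon> * measure (P X') B + \<delta>)"

end

theory Submission
  imports Defs "HOL-Probability.Distribution_Functions"
begin

(* Write b = exp (- \<epsilon>). The cdf A = std_tulap0_cdf b of Tulap(0, b, 0) is continuous,
   satisfies A (- y) = 1 - A y, and A (y - 1) = b * A y for y \<le> 1/2; hence A (y - 1) - b * A y
   is nondecreasing. The cdf of Tulap(k, b, q) is x \<mapsto> \<Psi> (x - k), where \<Psi> = std_tulap_cdf b q
   clamps (A - q/2) / (1 - q) to [0, 1].
   Neighbouring databases give locations k, k' with |k - k'| \<le> 1. For k' = k + 1 split the cdf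
   F = \<Psi> (. - k) as F1 + F2 with F1 = max 0 (F - \<delta>), so that F2 has mass \<delta>. Then
   \<Psi> (x - k - 1) / b - F1 x is nondecreasing: between the point where \<Psi> starts and the point
   where it reaches 1 it is a positive multiple of A (y - 1) - b * A y, and the value of q is
   exactly what makes F1 start one unit after \<Psi>. So the measure of Tulap(k + 1, b, q) divided
   by b dominates that of F1, and P_X(B) \<le> e^\<epsilon> P_X'(B) + \<delta>. The case k' = k - 1 follows by
   the symmetry \<Psi> (- y) = 1 - \<Psi> y. *)

lemma isCont_floor_glue:
  fixes g :: "int \<Rightarrow> real \<Rightarrow> real"
  assumes cont: "\<And>n y. isCont (g n) y" and glue: "\<And>n. g n (of_int n) = g (n - 1) (of_int n)"
  shows "isCont (\<lambda>u. g \<lfloor>u\<rfloor> u) x"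
  unfolding continuous_at_split
proof
  have "eventually (\<lambda>u. \<lfloor>u\<rfloor> = \<lfloor>x\<rfloor>) (at_right x)"
    using eventually_at_right_real[of x "of_int \<lfloor>x\<rfloor> + 1"]
    by (auto simp: floor_eq_iff elim!: eventually_mono) linarith
  then have "eventually (\<lambda>u. g \<lfloor>x\<rfloor> u = g \<lfloor>u\<rfloor> u) (at_right x)"
    by eventually_elim simp
  moreover have "(g \<lfloor>x\<rfloor> \<longlongrightarrow> g \<lfloor>x\<rfloor> x) (at_right x)"
    using cont[where n="\<lfloor>x\<rfloor>" and y=x] by (simp add: isCont_def filterlim_at_split)
  ultimately show "continuous (at_right x) (\<lambda>u. g \<lfloor>u\<rfloor> u)"
    unfolding continuous_within by (simp add: Lim_transform_eventually)
next
  define m where "m = \<lceil>x\<rceil> - 1"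
  have "of_int m < x"
    using ceiling_correct[of x] by (simp add: m_def)
  from eventually_at_left_real[OF this] have "eventually (\<lambda>u. \<lfloor>u\<rfloor> = m) (at_left x)"
    by (rule eventually_mono)
      (use ceiling_correct[of x] in \<open>auto simp: m_def floor_eq_iff intro: less_le_trans[OF _ le_of_int_ceiling]\<close>)
  then have "eventually (\<lambda>u. g m u = g \<lfloor>u\<rfloor> u) (at_left x)"
    by eventually_elim simp
  moreover have "g m x = g \<lfloor>x\<rfloor> x"
  proof (cases "x \<in> \<int>")
    case True
    then show ?thesis using glue[of "\<lfloor>x\<rfloor>"] by (auto simp: m_def elim: Ints_cases)
  next
    case False
    then have "x \<noteq> of_int \<lfloor>x\<rfloor>" using Ints_of_int by metis
    then show ?thesis by (simp add: m_def ceiling_altdef)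
  qed
  moreover have "(g m \<longlongrightarrow> g m x) (at_left x)"
    using cont[where n=m and y=x] by (simp add: isCont_def filterlim_at_split)
  ultimately show "continuous (at_left x) (\<lambda>u. g \<lfloor>u\<rfloor> u)"
    unfolding continuous_within by (simp add: Lim_transform_eventually)
qed

lemma mono_from_three_pieces:
  fixes h :: "real \<Rightarrow> real"
  assumes "p \<le> r" "mono_on {..p} h" "mono_on {p..r} h" "mono_on {r..} h"
  shows "mono h"
proof
  have left: "h x \<le> h y" if "x \<le> y" "y \<le> r" for x y
  proof -
    consider "y \<le> p" | "p \<le> x" | "x \<le> p" "p \<le> y" by linarith
    then show ?thesis
    proof cases
      case 3
      then have "h x \<le> h p" "h p \<le> h y"
        using assms(1-3) that by (auto intro: mono_onD)
      then show ?thesis by simp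
    qed (use assms(2,3) that in \<open>auto intro: mono_onD\<close>)
  qed
  fix x y :: real assume "x \<le> y"
  consider "y \<le> r" | "r \<le> x" | "x \<le> r" "r \<le> y" by linarith
  then show "h x \<le> h y"
  proof cases
    case 3
    then have "h x \<le> h r" "h r \<le> h y" using left assms(4) by (auto intro: mono_onD)
    then show ?thesis by simp
  qed (use left assms(4) \<open>x \<le> y\<close> in \<open>auto intro: mono_onD\<close>)
qed

section \<open>The distribution function of Tulap(0, b, 0)\<close>

(* The lower branch of tulap0_cdf 0 b, with the nearest integer [y] replaced by \<lfloor>y + 1/2\<rfloor>
   (the two only differ at ties, where both choices give the same value), extended to all y. *)
definition tulap_tail :: "real \<Rightarrow> real \<Rightarrow> real" where
  "tulap_tail b y =
     b powi (- \<lfloor>y + 1/2\<rfloor>) / (1 + b) * (b + (y + 1/2 - of_int \<lfloor>y + 1/2\<rfloor>) * (1 - b))"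

lemma power_int_minus_diff_one:
  fixes b :: real
  assumes "b \<noteq> 0"
  shows "b powi (- (k - 1)) = b * b powi (- k)"
  using assms power_int_add[of b 1 "- k"] by simp

lemma tulap_tail_shift:
  assumes "0 < b"
  shows "tulap_tail b (y - 1) = b * tulap_tail b y"
proof -
  have floor_eq: "\<lfloor>y - 1 + 1/2\<rfloor> = \<lfloor>y + 1/2\<rfloor> - 1"
    by (metis add.commute add_diff_eq floor_diff_one)
  have "b powi (- (\<lfloor>y + 1/2\<rfloor> - 1)) = b * b powi (- \<lfloor>y + 1/2\<rfloor>)"
    using assms by (intro power_int_minus_diff_one) simp
  then show ?thesis unfolding tulap_tail_def floor_eq by (simp add: field_simps)
qed

lemma tulap_tail_nonneg:
  assumes "0 < b" "b < 1"
  shows "0 \<le> tulap_tail b y"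
proof -
  have "0 \<le> y + 1/2 - of_int \<lfloor>y + 1/2\<rfloor>" by linarith
  then show ?thesis
    unfolding tulap_tail_def using assms
    by (intro mult_nonneg_nonneg divide_nonneg_pos add_nonneg_nonneg) auto
qed

lemma mono_tulap_tail:
  assumes "0 < b" "b < 1"
  shows "mono (tulap_tail b)"
proof
  fix x y :: real assume "x \<le> y"
  define n where "n = \<lfloor>x + 1/2\<rfloor>"
  define k where "k = \<lfloor>y + 1/2\<rfloor>"
  have "n \<le> k" unfolding n_def k_def using \<open>x \<le> y\<close> by (intro floor_mono) simp
  have frac_x: "x + 1/2 - n < 1" unfolding n_def by linarith
  have frac_y: "0 \<le> y + 1/2 - k" unfolding k_def by linarith
  have tail_x: "tulap_tail b x = b powi (- n) / (1 + b) * (b + (x + 1/2 - n) * (1 - b))"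
    and tail_y: "tulap_tail b y = b powi (- k) / (1 + b) * (b + (y + 1/2 - k) * (1 - b))"
    unfolding tulap_tail_def n_def k_def by simp_all
  show "tulap_tail b x \<le> tulap_tail b y"
  proof (cases "n = k")
    case True
    show ?thesis
      unfolding tail_x tail_y True using assms \<open>x \<le> y\<close>
      by (intro mult_left_mono add_left_mono mult_right_mono) auto
  next
    case False
    \<comment> \<open>the tail stays below \<open>b powi (- n) / (1 + b)\<close> on its own linear piece, above it later\<close>
    have "(x + 1/2 - n) * (1 - b) \<le> 1 - b"
      using frac_x assms mult_right_mono[of "x + 1/2 - n" 1 "1 - b"] by simp
    then have "b + (x + 1/2 - n) * (1 - b) \<le> 1" by linarith
    then have "tulap_tail b x \<le> b powi (- n) / (1 + b)"
      unfolding tail_x using assms mult_left_mono[of _ 1 "b powi (- n) / (1 + b)"] by simp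
    also have "b powi (- n) \<le> b powi (- (k - 1))"
      using assms \<open>n \<le> k\<close> False by (intro power_int_decreasing) auto
    then have "b powi (- n) / (1 + b) \<le> b powi (- k) / (1 + b) * b"
      using assms power_int_minus_diff_one[of b k] by (simp add: divide_right_mono mult.commute)
    also have "\<dots> \<le> tulap_tail b y"
      unfolding tail_y using frac_y assms by (intro mult_left_mono) auto
    finally show ?thesis .
  qed
qed

lemma isCont_tulap_tail:
  assumes "0 < b"
  shows "isCont (tulap_tail b) x"
proof -
  define g where "g = (\<lambda>(n::int) (u::real). b powi (- n) / (1 + b) * (b + (u - of_int n) * (1 - b)))"
  have "isCont (\<lambda>u. g \<lfloor>u\<rfloor> u) (x + 1/2)"
  proof (rule isCont_floor_glue)
    show "isCont (g n) y" for n y unfolding g_def by (intro continuous_intros)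
    show "g n (of_int n) = g (n - 1) (of_int n)" for n
      using assms power_int_minus_diff_one[of b n] unfolding g_def by (simp add: field_simps)
  qed
  moreover have "tulap_tail b = (\<lambda>y. g \<lfloor>y + 1/2\<rfloor> (y + 1/2))"
    unfolding tulap_tail_def g_def by (auto simp: fun_eq_iff)
  ultimately show ?thesis
    using isCont_o2[where f="\<lambda>y. y + 1/2" and g="\<lambda>u. g \<lfloor>u\<rfloor> u"] by simp
qed

lemma tulap_tail_zero: "0 < b \<Longrightarrow> tulap_tail b 0 = 1/2"
  unfolding tulap_tail_def by (simp add: field_simps)

lemma tulap_tail_minus_half: "tulap_tail b (- (1/2)) = b / (1 + b)"
  unfolding tulap_tail_def by simp

lemma tulap_tail_half: "0 < b \<Longrightarrow> tulap_tail b (1/2) = 1 / (1 + b)"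
  unfolding tulap_tail_def by simp

lemma tulap_tail_reflect:
  assumes "0 < b" "\<bar>y\<bar> \<le> 1/2"
  shows "tulap_tail b y + tulap_tail b (- y) = 1"
proof -
  consider "\<bar>y\<bar> = 1/2" | "\<bar>y\<bar> < 1/2" using assms by linarith
  then show ?thesis
  proof cases
    case 1
    have "tulap_tail b (1/2) + tulap_tail b (- 1/2) = 1"
      using assms by (simp add: tulap_tail_half tulap_tail_minus_half add_divide_distrib[symmetric])
    moreover from 1 have "y = 1/2 \<or> y = - 1/2" by linarith
    ultimately show ?thesis by (elim disjE; hypsubst) (simp_all add: add.commute)
  next
    case 2
    then have "\<lfloor>y + 1/2\<rfloor> = 0" "\<lfloor>- y + 1/2\<rfloor> = 0" by (auto simp: floor_eq_iff)
    then have "tulap_tail b y + tulap_tail b (- y)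
        = ((b + (y + 1/2) * (1 - b)) + (b + (- y + 1/2) * (1 - b))) / (1 + b)"
      unfolding tulap_tail_def by (simp add: add_divide_distrib)
    also have "\<dots> = (1 + b) / (1 + b)" by (simp add: algebra_simps)
    finally show ?thesis using assms by simp
  qed
qed

definition std_tulap0_cdf :: "real \<Rightarrow> real \<Rightarrow> real" where
  "std_tulap0_cdf b y = (if y \<le> 0 then tulap_tail b y else 1 - tulap_tail b (- y))"

lemma isCont_std_tulap0_cdf:
  assumes "0 < b"
  shows "isCont (std_tulap0_cdf b) x"
proof -
  have "std_tulap0_cdf b = (\<lambda>y. tulap_tail b (min y 0) + 1/2 - tulap_tail b (min (- y) 0))"
    using tulap_tail_zero[OF assms] unfolding std_tulap0_cdf_def by (auto simp: fun_eq_iff min_def)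
  moreover have "isCont (\<lambda>y. tulap_tail b (min y 0)) x"
    by (rule isCont_o2[where f="\<lambda>y. min y 0", OF _ isCont_tulap_tail[OF assms]])
      (intro continuous_intros)
  moreover have "isCont (\<lambda>y. tulap_tail b (min (- y) 0)) x"
    by (rule isCont_o2[where f="\<lambda>y. min (- y) 0", OF _ isCont_tulap_tail[OF assms]])
      (intro continuous_intros)
  ultimately show ?thesis by (simp add: continuous_intros)
qed

lemma continuous_on_std_tulap0_cdf: "0 < b \<Longrightarrow> continuous_on S (std_tulap0_cdf b)"
  by (simp add: isCont_std_tulap0_cdf continuous_at_imp_continuous_on)

lemma mono_std_tulap0_cdf:
  assumes "0 < b" "b < 1"
  shows "mono (std_tulap0_cdf b)"
proof
  have tail_mono: "tulap_tail b u \<le> tulap_tail b v" if "u \<le> v" for u v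
    using mono_tulap_tail[OF assms] that by (rule monoD)
  have below_half: "tulap_tail b z \<le> 1/2" if "z \<le> 0" for z
    using tail_mono[OF that] tulap_tail_zero[OF assms(1)] by simp
  fix x y :: real assume "x \<le> y"
  then show "std_tulap0_cdf b x \<le> std_tulap0_cdf b y"
    unfolding std_tulap0_cdf_def
    using tail_mono[of x y] tail_mono[of "- y" "- x"] below_half[of x] below_half[of "- y"]
    by auto
qed

lemma std_tulap0_cdf_reflect:
  assumes "0 < b"
  shows "std_tulap0_cdf b (- y) = 1 - std_tulap0_cdf b y"
  using tulap_tail_zero[OF assms] unfolding std_tulap0_cdf_def by auto

lemma std_tulap0_cdf_zero: "0 < b \<Longrightarrow> std_tulap0_cdf b 0 = 1/2"
  unfolding std_tulap0_cdf_def by (simp add: tulap_tail_zero)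

lemma std_tulap0_cdf_minus_half: "std_tulap0_cdf b (- (1/2)) = b / (1 + b)"
  unfolding std_tulap0_cdf_def using tulap_tail_minus_half by simp

lemma std_tulap0_cdf_half: "0 < b \<Longrightarrow> std_tulap0_cdf b (1/2) = 1 / (1 + b)"
  using std_tulap0_cdf_reflect[of b "1/2"] std_tulap0_cdf_minus_half[of b] by (simp add: field_simps)

lemma std_tulap0_cdf_shift_left:
  assumes "0 < b" "y \<le> 1/2"
  shows "std_tulap0_cdf b (y - 1) = b * std_tulap0_cdf b y"
proof (cases "y \<le> 0")
  case True
  then show ?thesis unfolding std_tulap0_cdf_def using tulap_tail_shift[OF assms(1)] by simp
next
  case False
  then have "std_tulap0_cdf b y = tulap_tail b y"
    unfolding std_tulap0_cdf_def using tulap_tail_reflect[OF assms(1), of y] assms by auto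
  then show ?thesis unfolding std_tulap0_cdf_def using tulap_tail_shift[OF assms(1), of y] assms by simp
qed

lemma std_tulap0_cdf_shift_right:
  assumes "0 < b" "- (1/2) \<le> y"
  shows "std_tulap0_cdf b (y + 1) = 1 - b * (1 - std_tulap0_cdf b y)"
proof -
  have "std_tulap0_cdf b (y + 1) = 1 - std_tulap0_cdf b (- y - 1)"
    using std_tulap0_cdf_reflect[OF assms(1), of "y + 1"] by simp
  also have "std_tulap0_cdf b (- y - 1) = b * std_tulap0_cdf b (- y)"
    using assms by (intro std_tulap0_cdf_shift_left) auto
  finally show ?thesis
    using std_tulap0_cdf_reflect[OF assms(1), of y] by simp
qed

lemma std_tulap0_cdf_nonneg:
  assumes "0 < b" "b < 1"
  shows "0 \<le> std_tulap0_cdf b y"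
proof (cases "y \<le> 0")
  case True
  then show ?thesis unfolding std_tulap0_cdf_def using tulap_tail_nonneg[OF assms] by simp
next
  case False
  then have "std_tulap0_cdf b 0 \<le> std_tulap0_cdf b y"
    using mono_std_tulap0_cdf[OF assms] by (simp add: monoD)
  then show ?thesis using std_tulap0_cdf_zero[OF assms(1)] by simp
qed

lemma std_tulap0_cdf_le_one: "0 < b \<Longrightarrow> b < 1 \<Longrightarrow> std_tulap0_cdf b y \<le> 1"
  using std_tulap0_cdf_nonneg[of b "- y"] std_tulap0_cdf_reflect[of b y] by simp

lemma std_tulap0_cdf_minus_nat: "0 < b \<Longrightarrow> std_tulap0_cdf b (- real n) = b ^ n / 2"
proof (induction n)
  case 0
  then show ?case by (simp add: std_tulap0_cdf_zero)
next
  case (Suc n)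
  have "- real (Suc n) = - real n - 1" by simp
  then have "std_tulap0_cdf b (- real (Suc n)) = std_tulap0_cdf b (- real n - 1)" by (simp only:)
  also have "\<dots> = b * std_tulap0_cdf b (- real n)"
    using Suc by (intro std_tulap0_cdf_shift_left) simp_all
  finally show ?case using Suc by simp
qed

lemma std_tulap0_cdf_at_bot:
  assumes "0 < b" "b < 1"
  shows "(std_tulap0_cdf b \<longlongrightarrow> 0) at_bot"
proof -
  have "mono (\<lambda>x. - std_tulap0_cdf b (- x))"
    using mono_std_tulap0_cdf[OF assms] by (auto simp: mono_def)
  moreover have "(\<lambda>n. - std_tulap0_cdf b (- real n)) \<longlonglongrightarrow> - 0"
    unfolding std_tulap0_cdf_minus_nat[OF assms(1)] using assms
    by (intro tendsto_minus tendsto_divide_zero LIMSEQ_power_zero) auto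
  ultimately have "((\<lambda>x. - std_tulap0_cdf b (- x)) \<longlongrightarrow> - 0) at_top"
    by (intro tendsto_at_topI_sequentially_real) simp_all
  then have "((\<lambda>x. - std_tulap0_cdf b (- (- x))) \<longlongrightarrow> - 0) at_bot"
    by (rule filterlim_compose[OF _ filterlim_uminus_at_top_at_bot])
  then show ?thesis by (simp add: tendsto_minus_cancel_left[symmetric])
qed

lemma std_tulap0_cdf_at_top:
  assumes "0 < b" "b < 1"
  shows "(std_tulap0_cdf b \<longlongrightarrow> 1) at_top"
proof -
  have "((\<lambda>x. std_tulap0_cdf b (- x)) \<longlongrightarrow> 0) at_top"
    by (rule filterlim_compose[OF std_tulap0_cdf_at_bot[OF assms] filterlim_uminus_at_bot_at_top])
  then have "((\<lambda>x. 1 - std_tulap0_cdf b (- x)) \<longlongrightarrow> 1 - 0) at_top"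
    by (intro tendsto_diff) auto
  then show ?thesis using std_tulap0_cdf_reflect[OF assms(1)] by simp
qed

lemma std_tulap0_cdf_shift_gap:
  assumes "0 < b" "b < 1"
  shows "std_tulap0_cdf b (t - 1) - b * std_tulap0_cdf b t
       = (1/b - b) * max (std_tulap0_cdf b t) (1 / (1 + b)) - (1 - b) / b"
proof (cases "t \<le> 1/2")
  case True
  then have "std_tulap0_cdf b t \<le> 1 / (1 + b)"
    using mono_std_tulap0_cdf[OF assms] std_tulap0_cdf_half[OF assms(1)] by (metis monoD)
  moreover have "1/b - b = (1 - b) * (1 + b) / b"
    using assms by (simp add: field_simps)
  ultimately show ?thesis using std_tulap0_cdf_shift_left[OF assms(1) True] assms by simp
next
  case False
  then have "1 / (1 + b) \<le> std_tulap0_cdf b t"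
    using mono_std_tulap0_cdf[OF assms] std_tulap0_cdf_half[OF assms(1)] by (metis monoD nle_le)
  then have max_eq: "max (std_tulap0_cdf b t) (1 / (1 + b)) = std_tulap0_cdf b t" by simp
  have "std_tulap0_cdf b t = 1 - b * (1 - std_tulap0_cdf b (t - 1))"
    using std_tulap0_cdf_shift_right[OF assms(1), of "t - 1"] False by simp
  then have pred_eq: "std_tulap0_cdf b (t - 1) = (std_tulap0_cdf b t - 1 + b) / b"
    using assms by (simp add: field_simps)
  show ?thesis unfolding max_eq pred_eq using assms by (simp add: field_simps)
qed

lemma mono_std_tulap0_cdf_shift_gap:
  assumes "0 < b" "b < 1"
  shows "mono (\<lambda>t. std_tulap0_cdf b (t - 1) - b * std_tulap0_cdf b t)"
proof
  fix x y :: real assume "x \<le> y"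
  have "0 \<le> 1/b - b"
    using assms by (simp add: field_simps) (metis less_eq_real_def mult_le_one)
  moreover have "max (std_tulap0_cdf b x) (1 / (1 + b)) \<le> max (std_tulap0_cdf b y) (1 / (1 + b))"
    using monoD[OF mono_std_tulap0_cdf[OF assms] \<open>x \<le> y\<close>] by (rule max.mono) simp
  ultimately show "std_tulap0_cdf b (x - 1) - b * std_tulap0_cdf b x
      \<le> std_tulap0_cdf b (y - 1) - b * std_tulap0_cdf b y"
    unfolding std_tulap0_cdf_shift_gap[OF assms] by (simp add: mult_left_mono)
qed

section \<open>The Tulap distribution functions in terms of the standard ones\<close>

lemma nearest_int_of_int [simp]: "nearest_int (of_int k) = k"
  unfolding nearest_int_def by simp

lemma nearest_int_cases:
  fixes y :: real
  obtains (no_tie) "nearest_int y = \<lfloor>y + 1/2\<rfloor>" "y - of_int \<lfloor>y\<rfloor> \<noteq> 1/2"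
    | (tie) z where "y = of_int z + 1/2" "nearest_int y = z \<or> nearest_int y = z + 1"
proof (cases "y - of_int \<lfloor>y\<rfloor> = 1/2")
  case True
  then show ?thesis using tie[of "\<lfloor>y\<rfloor>"] unfolding nearest_int_def by auto
next
  case False
  then show ?thesis using no_tie unfolding nearest_int_def round_def by auto
qed

lemma nearest_int_lower_branch:
  fixes b y :: real
  assumes "b \<noteq> 0"
  shows "b powi (- nearest_int y) * (b + (y - of_int (nearest_int y) + 1/2) * (1 - b))
       = b powi (- \<lfloor>y + 1/2\<rfloor>) * (b + (y + 1/2 - of_int \<lfloor>y + 1/2\<rfloor>) * (1 - b))"
proof (cases y rule: nearest_int_cases)
  case no_tie
  then show ?thesis by (simp add: algebra_simps)
next
  case (tie z)
  then have "\<lfloor>y + 1/2\<rfloor> = z + 1" by (simp add: floor_eq_iff)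
  moreover have "b powi (- (z + 1)) * b = b powi (- z)"
    using power_int_minus_diff_one[OF assms, of "z + 1"] by (simp add: mult.commute)
  ultimately show ?thesis using tie by (auto simp: algebra_simps)
qed

lemma nearest_int_upper_branch:
  fixes b y :: real
  assumes "b \<noteq> 0"
  shows "b powi (nearest_int y) * (b + (of_int (nearest_int y) - y + 1/2) * (1 - b))
       = b powi (- \<lfloor>- y + 1/2\<rfloor>) * (b + (- y + 1/2 - of_int \<lfloor>- y + 1/2\<rfloor>) * (1 - b))"
proof (cases y rule: nearest_int_cases)
  case no_tie
  define n where "n = \<lfloor>y + 1/2\<rfloor>"
  have "y + 1/2 \<noteq> of_int n"
  proof
    assume "y + 1/2 = of_int n"
    then have "\<lfloor>y\<rfloor> = n - 1" by (simp add: floor_eq_iff)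
    with no_tie(2) \<open>y + 1/2 = of_int n\<close> show False by simp
  qed
  moreover have "of_int n \<le> y + 1/2" "y + 1/2 < of_int n + 1" unfolding n_def by linarith+
  ultimately have "\<lfloor>- y + 1/2\<rfloor> = - n" by (simp add: floor_eq_iff)
  then show ?thesis using no_tie(1) unfolding n_def[symmetric] by (simp add: algebra_simps)
next
  case (tie z)
  then have "\<lfloor>- y + 1/2\<rfloor> = - z" by (simp add: floor_eq_iff)
  moreover have "b powi (z + 1) = b powi z * b"
    using assms by (simp add: power_int_add_1)
  ultimately show ?thesis using tie by (auto simp: algebra_simps)
qed

lemma tulap0_cdf_eq_std:
  assumes "0 < b"
  shows "tulap0_cdf (of_int k) b x = std_tulap0_cdf b (x - of_int k)"
proof (cases "x \<le> of_int k")
  case True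
  have "tulap0_cdf (of_int k) b x
      = b powi (- nearest_int (x - k)) * (b + ((x - k) - of_int (nearest_int (x - k)) + 1/2) * (1 - b)) / (1 + b)"
    unfolding tulap0_cdf_def using True by simp
  also have "\<dots> = tulap_tail b (x - k)"
    using nearest_int_lower_branch[of b "x - k"] assms unfolding tulap_tail_def by simp
  finally show ?thesis unfolding std_tulap0_cdf_def using True by simp
next
  case False
  have "tulap0_cdf (of_int k) b x
      = 1 - b powi (nearest_int (x - k)) * (b + (of_int (nearest_int (x - k)) - (x - k) + 1/2) * (1 - b)) / (1 + b)"
    unfolding tulap0_cdf_def using False by simp
  also have "\<dots> = 1 - tulap_tail b (- (x - k))"
    using nearest_int_upper_branch[of b "x - k"] assms unfolding tulap_tail_def by simp
  finally show ?thesis unfolding std_tulap0_cdf_def using False by simp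
qed

definition std_tulap_cdf :: "real \<Rightarrow> real \<Rightarrow> real \<Rightarrow> real" where
  "std_tulap_cdf b q y = max 0 (min 1 ((std_tulap0_cdf b y - q/2) / (1 - q)))"

lemma tulap_cdf_eq_std:
  assumes "0 < b" "0 \<le> q" "q < 1"
  shows "tulap_cdf (of_int k) b q x = std_tulap_cdf b q (x - of_int k)"
proof -
  define F where "F = tulap0_cdf (of_int k) b x"
  have "0 < 1 - q" using assms by simp
  then consider "F < q/2" "(F - q/2) / (1 - q) < 0"
    | "q/2 \<le> F" "F \<le> 1 - q/2" "0 \<le> (F - q/2) / (1 - q)" "(F - q/2) / (1 - q) \<le> 1"
    | "F > 1 - q/2" "(F - q/2) / (1 - q) > 1"
    by (cases "F < q/2"; cases "F > 1 - q/2") (auto simp: divide_less_0_iff divide_le_eq le_divide_eq less_divide_eq)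
  then have "tulap_cdf (of_int k) b q x = max 0 (min 1 ((F - q/2) / (1 - q)))"
    unfolding tulap_cdf_def F_def[symmetric] Let_def by cases (use assms in auto)
  then show ?thesis
    unfolding std_tulap_cdf_def F_def tulap0_cdf_eq_std[OF assms(1)] .
qed

section \<open>Finite measures from distribution functions\<close>

definition distribution_fun :: "(real \<Rightarrow> real) \<Rightarrow> real \<Rightarrow> bool" where
  "distribution_fun F m \<longleftrightarrow>
     mono F \<and> (\<forall>a. continuous (at_right a) F) \<and>
     (F \<longlongrightarrow> 0) at_bot \<and> (F \<longlongrightarrow> m) at_top"

lemma distribution_fun_nonneg:
  assumes "distribution_fun F m"
  shows "0 \<le> F x"
proof -
  have "eventually (\<lambda>y. F y \<le> F x) at_bot"
    using assms unfolding distribution_fun_def eventually_at_bot_linorder by (auto dest: monoD)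
  then show ?thesis
    using assms unfolding distribution_fun_def by (auto intro: tendsto_upperbound)
qed

lemma distribution_fun_mass_nonneg:
  assumes "distribution_fun F m"
  shows "0 \<le> m"
proof -
  have "(F \<longlongrightarrow> m) at_top" using assms unfolding distribution_fun_def by simp
  then show ?thesis by (rule tendsto_lowerbound) (auto simp: distribution_fun_nonneg[OF assms])
qed

lemma distribution_fun_finite_borel_measure:
  assumes "distribution_fun F m"
  shows "finite_borel_measure (interval_measure F)"
  using assms distribution_fun_mass_nonneg[OF assms] unfolding distribution_fun_def
  by (intro finite_borel_measure_interval_measure[where m=m]) (auto dest: monoD)

lemma distribution_fun_measure_UNIV:
  assumes "distribution_fun F m"
  shows "measure (interval_measure F) UNIV = m"
proof -
  have "emeasure (interval_measure F) UNIV = m"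
    using assms distribution_fun_mass_nonneg[OF assms] unfolding distribution_fun_def
    by (intro interval_measure_UNIV) (auto dest: monoD)
  then show ?thesis
    using distribution_fun_mass_nonneg[OF assms] by (simp add: measure_def)
qed

lemma measure_interval_measure_le_mass:
  assumes "distribution_fun F m"
  shows "measure (interval_measure F) B \<le> m"
proof -
  interpret finite_measure "interval_measure F"
    using distribution_fun_finite_borel_measure[OF assms] finite_borel_measure.axioms(1) by blast
  show ?thesis using bounded_measure[of B] distribution_fun_measure_UNIV[OF assms] by simp
qed

lemma distribution_fun_zero: "distribution_fun (\<lambda>x. 0) 0"
  unfolding distribution_fun_def by (simp add: mono_def)

lemma distribution_fun_lincomb:
  assumes "distribution_fun P mp" "distribution_fun Q mq" "0 \<le> a"
  shows "distribution_fun (\<lambda>x. a * P x + Q x) (a * mp + mq)"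
  using assms unfolding distribution_fun_def mono_def
  by (auto intro!: add_mono mult_left_mono tendsto_eq_intros continuous_add continuous_mult)

lemma distribution_fun_truncate:
  assumes F: "distribution_fun F m" and t: "0 \<le> t" "t \<le> m"
  shows "distribution_fun (\<lambda>x. max 0 (F x - t)) (m - t)"
    and "distribution_fun (\<lambda>x. min (F x) t) t"
proof -
  have mono: "mono F" and cont: "\<forall>a. continuous (at_right a) F"
    and bot: "(F \<longlongrightarrow> 0) at_bot" and top: "(F \<longlongrightarrow> m) at_top"
    using F unfolding distribution_fun_def by auto
  have "((\<lambda>x. max 0 (F x - t)) \<longlongrightarrow> max 0 (0 - t)) at_bot"
    and "((\<lambda>x. max 0 (F x - t)) \<longlongrightarrow> max 0 (m - t)) at_top"
    by (intro tendsto_intros bot top)+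
  moreover have "mono (\<lambda>x. max 0 (F x - t))"
    using mono by (intro monoI max.mono order_refl diff_right_mono) (auto dest: monoD)
  ultimately show "distribution_fun (\<lambda>x. max 0 (F x - t)) (m - t)"
    using cont t unfolding distribution_fun_def by (auto intro!: continuous_max continuous_diff)
  have "((\<lambda>x. min (F x) t) \<longlongrightarrow> min 0 t) at_bot"
    and "((\<lambda>x. min (F x) t) \<longlongrightarrow> min m t) at_top"
    by (intro tendsto_intros bot top)+
  moreover have "mono (\<lambda>x. min (F x) t)"
    using mono by (intro monoI min.mono order_refl) (auto dest: monoD)
  ultimately show "distribution_fun (\<lambda>x. min (F x) t) t"
    using cont t unfolding distribution_fun_def by (auto intro!: continuous_min)
qed

lemma measure_interval_measure_lincomb:
  assumes P: "distribution_fun P mp" and Q: "distribution_fun Q mq" and "0 \<le> a"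
    and B: "B \<in> sets borel"
  shows "measure (interval_measure (\<lambda>x. a * P x + Q x)) B
       = a * measure (interval_measure P) B + measure (interval_measure Q) B"
proof -
  define R where "R = (\<lambda>x. a * P x + Q x)"
  have R: "distribution_fun R (a * mp + mq)"
    unfolding R_def using distribution_fun_lincomb[OF P Q \<open>0 \<le> a\<close>] .
  have Ioc: "measure (interval_measure F) {u<..v} = F v - F u"
    if "distribution_fun F m" "u \<le> v" for F m u v
    using that unfolding distribution_fun_def by (intro measure_interval_measure_Ioc) (auto dest: monoD)
  interpret MR: finite_borel_measure "interval_measure R" by (rule distribution_fun_finite_borel_measure[OF R])
  interpret MP: finite_borel_measure "interval_measure P" by (rule distribution_fun_finite_borel_measure[OF P])
  interpret MQ: finite_borel_measure "interval_measure Q" by (rule distribution_fun_finite_borel_measure[OF Q])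
  define Ioc_sets where "Ioc_sets = range (\<lambda>(u, v). {u<..v::real})"
  have borel_eq: "sets borel = sigma_sets UNIV Ioc_sets"
    unfolding Ioc_sets_def borel_sigma_sets_Ioc by (rule sets_measure_of) auto
  have "Int_stable Ioc_sets" unfolding Ioc_sets_def Int_stable_def by auto
  moreover have "Ioc_sets \<subseteq> Pow UNIV" by simp
  moreover have "B \<in> sigma_sets UNIV Ioc_sets" using B borel_eq by simp
  ultimately have "measure (interval_measure R) B
       = a * measure (interval_measure P) B + measure (interval_measure Q) B"
  proof (induction rule: sigma_sets_induct_disjoint)
    case (basic A)
    then obtain u v where A: "A = {u<..v}" unfolding Ioc_sets_def by auto
    show ?case
    proof (cases "u \<le> v")
      case True
      then show ?thesis
        unfolding A Ioc[OF R True] Ioc[OF P True] Ioc[OF Q True] by (simp add: R_def algebra_simps)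
    qed (simp add: A)
  next
    case empty
    show ?case by simp
  next
    case (compl A)
    then have "A \<in> sets borel" using borel_eq by simp
    then have compl_eqs: "measure (interval_measure R) (UNIV - A) = (a * mp + mq) - measure (interval_measure R) A"
      "measure (interval_measure P) (UNIV - A) = mp - measure (interval_measure P) A"
      "measure (interval_measure Q) (UNIV - A) = mq - measure (interval_measure Q) A"
      using MR.finite_measure_compl[of A] MP.finite_measure_compl[of A] MQ.finite_measure_compl[of A]
        distribution_fun_measure_UNIV[OF R] distribution_fun_measure_UNIV[OF P]
        distribution_fun_measure_UNIV[OF Q]
      by simp_all
    show ?case unfolding compl_eqs compl.IH by (simp add: algebra_simps)
  next
    case (union A)
    then have "range A \<subseteq> sets borel" using borel_eq by auto
    then have "(\<lambda>i. measure (interval_measure R) (A i)) sums measure (interval_measure R) (\<Union>i. A i)"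
      and "(\<lambda>i. measure (interval_measure R) (A i))
             sums (a * measure (interval_measure P) (\<Union>i. A i) + measure (interval_measure Q) (\<Union>i. A i))"
      using MR.finite_measure_UNION[of A] MP.finite_measure_UNION[of A] MQ.finite_measure_UNION[of A]
        union.hyps(1) union.IH
      by (auto intro!: sums_add sums_mult)
    then show ?case by (rule sums_unique2)
  qed
  then show ?thesis unfolding R_def .
qed

(* c * G - F1 is itself a distribution function, so c times the measure of G dominates that of F1. *)
lemma measure_interval_measure_le_split:
  assumes F: "distribution_fun F mF" and G: "distribution_fun G mG"
    and F1: "distribution_fun F1 m1" and F2: "distribution_fun F2 m2"
    and split: "\<And>x. F x = F1 x + F2 x"
    and gap_mono: "mono (\<lambda>x. c * G x - F1 x)"
    and "0 \<le> c" and "m2 \<le> d" and B: "B \<in> sets borel"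
  shows "measure (interval_measure F) B \<le> c * measure (interval_measure G) B + d"
proof -
  define H where "H = (\<lambda>x. c * G x - F1 x)"
  have H: "distribution_fun H (c * mG - m1)"
    using G F1 gap_mono unfolding distribution_fun_def H_def
    by (auto intro!: tendsto_eq_intros continuous_diff continuous_mult)
  have "F = (\<lambda>x. 1 * F1 x + F2 x)" using split by auto
  then have "measure (interval_measure F) B
      = measure (interval_measure F1) B + measure (interval_measure F2) B"
    using measure_interval_measure_lincomb[OF F1 F2 _ B, of 1] by simp
  also have "measure (interval_measure F1) B + measure (interval_measure H) B
      = c * measure (interval_measure G) B + measure (interval_measure (\<lambda>x. 0)) B"
    using measure_interval_measure_lincomb[OF F1 H _ B, of 1]
      measure_interval_measure_lincomb[OF G distribution_fun_zero \<open>0 \<le> c\<close> B]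
    by (simp add: H_def)
  ultimately show ?thesis
    using measure_interval_measure_le_mass[OF F2, of B] measure_interval_measure_le_mass[OF distribution_fun_zero, of B]
      measure_nonneg[of "interval_measure H" B] \<open>m2 \<le> d\<close>
    by linarith
qed

section \<open>The truncated distribution function\<close>

lemma mono_std_tulap_cdf:
  assumes "0 < b" "b < 1" "q < 1"
  shows "mono (std_tulap_cdf b q)"
proof
  fix x y :: real assume "x \<le> y"
  then have "std_tulap0_cdf b x - q/2 \<le> std_tulap0_cdf b y - q/2"
    using mono_std_tulap0_cdf[OF assms(1,2)] by (simp add: monoD)
  then have "(std_tulap0_cdf b x - q/2) / (1 - q) \<le> (std_tulap0_cdf b y - q/2) / (1 - q)"
    using assms(3) by (simp add: divide_right_mono)
  then show "std_tulap_cdf b q x \<le> std_tulap_cdf b q y"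
    unfolding std_tulap_cdf_def by (intro max.mono min.mono) simp_all
qed

lemma isCont_std_tulap_cdf:
  assumes "0 < b" "q < 1"
  shows "isCont (std_tulap_cdf b q) x"
  unfolding std_tulap_cdf_def[abs_def] using assms by (intro continuous_intros isCont_std_tulap0_cdf) auto

lemma std_tulap_cdf_reflect:
  assumes "0 < b" "q < 1"
  shows "std_tulap_cdf b q (- y) = 1 - std_tulap_cdf b q y"
proof -
  have "(std_tulap0_cdf b (- y) - q/2) / (1 - q) = 1 - (std_tulap0_cdf b y - q/2) / (1 - q)"
    using assms by (simp add: std_tulap0_cdf_reflect field_simps)
  then show ?thesis unfolding std_tulap_cdf_def by simp
qed

lemma std_tulap_cdf_no_truncation:
  assumes "0 < b" "b < 1"
  shows "std_tulap_cdf b 0 y = std_tulap0_cdf b y"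
  using std_tulap0_cdf_nonneg[OF assms] std_tulap0_cdf_le_one[OF assms]
  unfolding std_tulap_cdf_def by simp

lemma distribution_fun_std_tulap_cdf:
  assumes "0 < b" "b < 1" "0 \<le> q" "q < 1"
  shows "distribution_fun (\<lambda>x. std_tulap_cdf b q (x - c)) 1"
  unfolding distribution_fun_def
proof (intro conjI allI)
  show "mono (\<lambda>x. std_tulap_cdf b q (x - c))"
    using mono_std_tulap_cdf[OF assms(1,2,4)] by (simp add: mono_def)
  show "continuous (at_right a) (\<lambda>x. std_tulap_cdf b q (x - c))" for a
    using isCont_o2[where f="\<lambda>x. x - c", OF _ isCont_std_tulap_cdf[OF assms(1,4)]]
    by (simp add: continuous_at_imp_continuous_at_within)
  have "(0 - q/2) / (1 - q) \<le> 0"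
    using assms by (intro divide_nonpos_pos) auto
  have "(std_tulap_cdf b q \<longlongrightarrow> max 0 (min 1 ((0 - q/2) / (1 - q)))) at_bot"
    unfolding std_tulap_cdf_def[abs_def] by (intro tendsto_intros std_tulap0_cdf_at_bot assms) (use assms in auto)
  moreover have "max 0 (min 1 ((0 - q/2) / (1 - q))) = 0"
    using \<open>(0 - q/2) / (1 - q) \<le> 0\<close> by simp
  moreover have "filterlim (\<lambda>x. x - c) at_bot at_bot"
    using filterlim_tendsto_add_at_bot_iff[of "\<lambda>_. - c" "- c" at_bot "\<lambda>x. x"]
    by (simp add: filterlim_ident)
  ultimately show "((\<lambda>x. std_tulap_cdf b q (x - c)) \<longlongrightarrow> 0) at_bot"
    using filterlim_compose by fastforce
  have "(std_tulap_cdf b q \<longlongrightarrow> max 0 (min 1 ((1 - q/2) / (1 - q)))) at_top"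
    unfolding std_tulap_cdf_def[abs_def] by (intro tendsto_intros std_tulap0_cdf_at_top assms) (use assms in auto)
  moreover have "max 0 (min 1 ((1 - q/2) / (1 - q))) = 1"
    using assms by (simp add: le_divide_eq)
  moreover have "filterlim (\<lambda>x. x - c) at_top at_top"
    by (rule filterlim_tendsto_add_at_top[OF tendsto_const filterlim_ident, of "- c", simplified])
  ultimately show "((\<lambda>x. std_tulap_cdf b q (x - c)) \<longlongrightarrow> 1) at_top"
    using filterlim_compose by fastforce
qed

lemma Tulap_eq_interval_measure:
  assumes "0 < b" "0 \<le> q" "q < 1"
  shows "Tulap (of_int k) b q = interval_measure (\<lambda>x. std_tulap_cdf b q (x - of_int k))"
  unfolding Tulap_def by (rule arg_cong[where f=interval_measure]) (simp add: fun_eq_iff tulap_cdf_eq_std[OF assms])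

lemma tulap_q_bounds:
  fixes b \<delta> q :: real
  assumes "0 < b" "b < 1" "0 \<le> \<delta>" "q = 2 * \<delta> * b / (1 - b + 2 * \<delta> * b)"
  shows "0 \<le> q" "q < 1"
proof -
  have "0 < 1 - b + 2 * \<delta> * b" using assms by (simp add: add_pos_nonneg)
  then show "0 \<le> q" "q < 1" unfolding assms(4) using assms(1-3) by (simp_all add: divide_less_eq)
qed

lemma exists_tulap_threshold:
  assumes "0 < b" "b < 1" "0 < \<delta>" "\<delta> < 1" "q = 2 * \<delta> * b / (1 - b + 2 * \<delta> * b)"
  shows "\<exists>L \<le> - (1/2). std_tulap0_cdf b L = q/2"
proof -
  have D: "0 < 1 - b + 2 * \<delta> * b" using assms by (simp add: add_pos_nonneg)
  have "0 < q/2" using assms D by simp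
  have "b * (\<delta> * (1 - b)) \<le> b * (1 - b)" using assms by (intro mult_left_mono) auto
  then have "\<delta> * b * (1 + b) \<le> b * (1 - b + 2 * \<delta> * b)" by (simp add: algebra_simps)
  moreover have "q/2 = \<delta> * b / (1 - b + 2 * \<delta> * b)"
    using assms D by (simp add: field_simps)
  ultimately have "q/2 \<le> b / (1 + b)"
    using assms D by (simp add: pos_divide_le_eq pos_le_divide_eq mult.commute mult.left_commute)
  have "eventually (\<lambda>y. std_tulap0_cdf b y < q/2) at_bot"
    using order_tendstoD(2)[OF std_tulap0_cdf_at_bot[OF assms(1,2)] \<open>0 < q/2\<close>] .
  then obtain N where N: "\<And>y. y \<le> N \<Longrightarrow> std_tulap0_cdf b y < q/2"
    unfolding eventually_at_bot_linorder by auto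
  define y0 where "y0 = min N (- (1/2))"
  have "std_tulap0_cdf b y0 \<le> q/2" using N[of y0] unfolding y0_def by simp
  moreover have "q/2 \<le> std_tulap0_cdf b (- (1/2))"
    using \<open>q/2 \<le> b / (1 + b)\<close> std_tulap0_cdf_minus_half[of b] by simp
  ultimately show ?thesis
    using IVT'[of "std_tulap0_cdf b" y0 "q/2" "- (1/2)"] continuous_on_std_tulap0_cdf[OF assms(1)]
    unfolding y0_def by fastforce
qed

(* L is the point where std_tulap_cdf b q leaves 0; the choice of q makes it reach \<delta> exactly at L + 1. *)
context
  fixes b \<delta> q L :: real
  assumes b: "0 < b" "b < 1" and \<delta>: "0 < \<delta>" "\<delta> < 1"
    and q_def: "q = 2 * \<delta> * b / (1 - b + 2 * \<delta> * b)"
    and L: "L \<le> - (1/2)" "std_tulap0_cdf b L = q/2"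
begin

lemma threshold_q_less_one: "q < 1"
  using tulap_q_bounds(2)[OF b less_imp_le[OF \<delta>(1)] q_def] .

lemma threshold_delta_eq: "\<delta> = (q/2/b - q/2) / (1 - q)"
proof -
  define D where "D = 1 - b + 2 * \<delta> * b"
  have "0 < D" unfolding D_def using b \<delta> by (simp add: add_pos_nonneg)
  have q_D: "q = 2 * \<delta> * b / D" unfolding q_def D_def ..
  have "q/2/b - q/2 = \<delta> * ((1 - b) / D)"
    unfolding q_D using b \<open>0 < D\<close> by (simp add: field_simps)
  also have "(1 - b) / D = 1 - q"
    unfolding q_D using \<open>0 < D\<close> by (simp add: field_simps D_def)
  finally show ?thesis using threshold_q_less_one by simp
qed

lemma std_tulap_cdf_middle:
  assumes "L \<le> y" "y \<le> - L"
  shows "std_tulap_cdf b q y = (std_tulap0_cdf b y - q/2) / (1 - q)"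
proof -
  have "q/2 \<le> std_tulap0_cdf b y" "std_tulap0_cdf b y \<le> 1 - q/2"
    using monoD[OF mono_std_tulap0_cdf[OF b] assms(1)] monoD[OF mono_std_tulap0_cdf[OF b] assms(2)]
      L(2) std_tulap0_cdf_reflect[OF b(1), of L]
    by simp_all
  then show ?thesis unfolding std_tulap_cdf_def using threshold_q_less_one by (simp add: divide_le_eq)
qed

lemma std_tulap_cdf_upper: "- L \<le> y \<Longrightarrow> std_tulap_cdf b q y = 1"
  using std_tulap_cdf_middle[of "- L"] monoD[OF mono_std_tulap_cdf[OF b threshold_q_less_one], of "- L" y]
    std_tulap_cdf_reflect[OF b(1) threshold_q_less_one, of L] L
  by (auto simp: std_tulap_cdf_def le_max_iff_disj)

lemma std_tulap_cdf_threshold_succ: "std_tulap_cdf b q (L + 1) = \<delta>"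
proof -
  have "std_tulap0_cdf b (L + 1) = q/2/b"
    using std_tulap0_cdf_shift_left[OF b(1), of "L + 1"] L b(1) by (simp add: field_simps)
  then show ?thesis
    using std_tulap_cdf_middle[of "L + 1"] L(1) threshold_delta_eq by simp
qed

lemma mono_std_tulap_cdf_gap_threshold:
  "mono (\<lambda>y. (1/b) * std_tulap_cdf b q (y - 1) - max 0 (std_tulap_cdf b q y - \<delta>))"
  (is "mono ?h")
proof (rule mono_from_three_pieces[of "L + 1" "- L"])
  have cdf_mono: "std_tulap_cdf b q x \<le> std_tulap_cdf b q y" if "x \<le> y" for x y
    using monoD[OF mono_std_tulap_cdf[OF b threshold_q_less_one] that] .
  show "L + 1 \<le> - L" using L by simp
  show "mono_on {..L + 1} ?h"
  proof (rule mono_onI)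
    fix x y assume "x \<in> {..L + 1}" "y \<in> {..L + 1}" "x \<le> y"
    then have "max 0 (std_tulap_cdf b q x - \<delta>) = 0" "max 0 (std_tulap_cdf b q y - \<delta>) = 0"
      using cdf_mono[of x "L + 1"] cdf_mono[of y "L + 1"] std_tulap_cdf_threshold_succ by simp_all
    then show "?h x \<le> ?h y"
      using cdf_mono[of "x - 1" "y - 1"] \<open>x \<le> y\<close> b by (simp add: divide_right_mono)
  qed
  show "mono_on {L + 1..- L} ?h"
  proof (rule mono_onI)
    fix x y assume "x \<in> {L + 1..- L}" "y \<in> {L + 1..- L}" "x \<le> y"
    \<comment> \<open>the choice of q cancels the constants, leaving a multiple of the shift gap of A\<close>
    have gap_algebra: "(1/b') * ((u - a) / s) - (v - a) / s + (a/b' - a) / s = (u - b' * v) / (b' * s)"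
      if "b' \<noteq> 0" "s \<noteq> 0" for u v a s b' :: real
      using that by (simp add: field_simps)
    have h_eq: "?h z = (std_tulap0_cdf b (z - 1) - b * std_tulap0_cdf b z) / (b * (1 - q))"
      if "z \<in> {L + 1..- L}" for z
    proof -
      have "\<delta> \<le> std_tulap_cdf b q z"
        using cdf_mono[of "L + 1" z] that std_tulap_cdf_threshold_succ by simp
      then have "?h z = (1/b) * std_tulap_cdf b q (z - 1) - std_tulap_cdf b q z + \<delta>" by simp
      also have "\<dots> = (1/b) * ((std_tulap0_cdf b (z - 1) - q/2) / (1 - q))
          - (std_tulap0_cdf b z - q/2) / (1 - q) + \<delta>"
        using that L(1) by (simp add: std_tulap_cdf_middle)
      also have "\<dots> = (std_tulap0_cdf b (z - 1) - b * std_tulap0_cdf b z) / (b * (1 - q))"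
        unfolding threshold_delta_eq using b threshold_q_less_one by (intro gap_algebra) auto
      finally show ?thesis .
    qed
    have "std_tulap0_cdf b (x - 1) - b * std_tulap0_cdf b x \<le> std_tulap0_cdf b (y - 1) - b * std_tulap0_cdf b y"
      using monoD[OF mono_std_tulap0_cdf_shift_gap[OF b] \<open>x \<le> y\<close>] .
    then show "?h x \<le> ?h y"
      unfolding h_eq[OF \<open>x \<in> _\<close>] h_eq[OF \<open>y \<in> _\<close>] using b threshold_q_less_one
      by (simp add: divide_right_mono)
  qed
  show "mono_on {- L..} ?h"
  proof (rule mono_onI)
    fix x y assume "x \<in> {- L..}" "y \<in> {- L..}" "x \<le> y"
    then show "?h x \<le> ?h y"
      using std_tulap_cdf_upper[of x] std_tulap_cdf_upper[of y] cdf_mono[of "x - 1" "y - 1"] b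
      by (simp add: divide_right_mono)
  qed
qed

end

lemma mono_std_tulap_cdf_gap:
  assumes b: "0 < b" "b < 1" and \<delta>: "0 \<le> \<delta>" "\<delta> < 1"
    and q_def: "q = 2 * \<delta> * b / (1 - b + 2 * \<delta> * b)"
  shows "mono (\<lambda>y. (1/b) * std_tulap_cdf b q (y - 1) - max 0 (std_tulap_cdf b q y - \<delta>))"
proof (cases "\<delta> = 0")
  case True
  then have "q = 0" unfolding q_def by simp
  have "(1/b) * std_tulap_cdf b q (y - 1) - max 0 (std_tulap_cdf b q y - \<delta>)
      = (std_tulap0_cdf b (y - 1) - b * std_tulap0_cdf b y) / b" for y
    using \<open>q = 0\<close> True b std_tulap0_cdf_nonneg[OF b, of y]
    by (simp add: std_tulap_cdf_no_truncation field_simps)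
  then show ?thesis
    using mono_std_tulap0_cdf_shift_gap[OF b] b by (simp add: mono_def divide_right_mono)
next
  case False
  then obtain L where "L \<le> - (1/2)" "std_tulap0_cdf b L = q/2"
    using exists_tulap_threshold[OF b _ \<delta>(2) q_def] \<delta>(1) by auto
  then show ?thesis
    using mono_std_tulap_cdf_gap_threshold[OF b _ \<delta>(2) q_def] \<delta>(1) False by simp
qed

lemma mono_std_tulap_cdf_gap_reflected:
  assumes b: "0 < b" "b < 1" and \<delta>: "0 \<le> \<delta>" "\<delta> < 1"
    and q_def: "q = 2 * \<delta> * b / (1 - b + 2 * \<delta> * b)"
  shows "mono (\<lambda>y. (1/b) * std_tulap_cdf b q (y + 1) - min (std_tulap_cdf b q y) (1 - \<delta>))"
proof -
  have "q < 1"
    using tulap_q_bounds(2)[OF b \<delta>(1) q_def] .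
  have reflect_eq: "(1/b) * std_tulap_cdf b q (y + 1) - min (std_tulap_cdf b q y) (1 - \<delta>)
      = (1/b - 1 + \<delta>) - ((1/b) * std_tulap_cdf b q (- y - 1) - max 0 (std_tulap_cdf b q (- y) - \<delta>))"
    for y
  proof -
    have "std_tulap_cdf b q (- y - 1) = std_tulap_cdf b q (- (y + 1))"
      by (rule arg_cong[where f="std_tulap_cdf b q"]) simp
    also have "\<dots> = 1 - std_tulap_cdf b q (y + 1)"
      by (rule std_tulap_cdf_reflect[OF b(1) \<open>q < 1\<close>])
    finally have reflect_pred: "std_tulap_cdf b q (- y - 1) = 1 - std_tulap_cdf b q (y + 1)" .
    show ?thesis
      unfolding reflect_pred std_tulap_cdf_reflect[OF b(1) \<open>q < 1\<close>, of y]
      by (simp add: algebra_simps min_def max_def)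
  qed
  show ?thesis
  proof
    fix x y :: real assume "x \<le> y"
    then have "(1/b) * std_tulap_cdf b q (- y - 1) - max 0 (std_tulap_cdf b q (- y) - \<delta>)
        \<le> (1/b) * std_tulap_cdf b q (- x - 1) - max 0 (std_tulap_cdf b q (- x) - \<delta>)"
      using monoD[OF mono_std_tulap_cdf_gap[OF assms], of "- y" "- x"] by simp
    then show "(1/b) * std_tulap_cdf b q (x + 1) - min (std_tulap_cdf b q x) (1 - \<delta>)
        \<le> (1/b) * std_tulap_cdf b q (y + 1) - min (std_tulap_cdf b q y) (1 - \<delta>)"
      unfolding reflect_eq by simp
  qed
qed

section \<open>Differential privacy of the Tulap mechanism\<close>

lemma measure_Tulap_le_succ:
  fixes k :: int
  assumes b: "0 < b" "b < 1" and \<delta>: "0 \<le> \<delta>" "\<delta> < 1"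
    and q_def: "q = 2 * \<delta> * b / (1 - b + 2 * \<delta> * b)" and B: "B \<in> sets borel"
  shows "measure (Tulap (of_int k) b q) B \<le> (1/b) * measure (Tulap (of_int (k + 1)) b q) B + \<delta>"
proof -
  have q: "0 \<le> q" "q < 1"
    using tulap_q_bounds[OF b \<delta>(1) q_def] by simp_all
  define F where "F = (\<lambda>x. std_tulap_cdf b q (x - of_int k))"
  have F: "distribution_fun F 1"
    unfolding F_def using distribution_fun_std_tulap_cdf[OF b q] .
  have gap_mono: "mono (\<lambda>x. (1/b) * std_tulap_cdf b q (x - of_int (k + 1)) - max 0 (F x - \<delta>))"
    using monoD[OF mono_std_tulap_cdf_gap[OF b \<delta> q_def], of "x - of_int k" "y - of_int k" for x y]
    unfolding F_def by (intro monoI) (simp add: algebra_simps)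
  show ?thesis
    unfolding Tulap_eq_interval_measure[OF b(1) q] F_def[symmetric]
    by (rule measure_interval_measure_le_split[OF F distribution_fun_std_tulap_cdf[OF b q]
          distribution_fun_truncate[OF F, of \<delta>] _ gap_mono _ _ B])
      (use b \<delta> in auto)
qed

lemma measure_Tulap_le_pred:
  fixes k :: int
  assumes b: "0 < b" "b < 1" and \<delta>: "0 \<le> \<delta>" "\<delta> < 1"
    and q_def: "q = 2 * \<delta> * b / (1 - b + 2 * \<delta> * b)" and B: "B \<in> sets borel"
  shows "measure (Tulap (of_int k) b q) B \<le> (1/b) * measure (Tulap (of_int (k - 1)) b q) B + \<delta>"
proof -
  have q: "0 \<le> q" "q < 1"
    using tulap_q_bounds[OF b \<delta>(1) q_def] by simp_all
  define F where "F = (\<lambda>x. std_tulap_cdf b q (x - of_int k))"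
  have F: "distribution_fun F 1"
    unfolding F_def using distribution_fun_std_tulap_cdf[OF b q] .
  have gap_mono: "mono (\<lambda>x. (1/b) * std_tulap_cdf b q (x - of_int (k - 1)) - min (F x) (1 - \<delta>))"
    using monoD[OF mono_std_tulap_cdf_gap_reflected[OF b \<delta> q_def], of "x - of_int k" "y - of_int k" for x y]
    unfolding F_def by (intro monoI) (simp add: algebra_simps)
  show ?thesis
    unfolding Tulap_eq_interval_measure[OF b(1) q] F_def[symmetric]
    by (rule measure_interval_measure_le_split[OF F distribution_fun_std_tulap_cdf[OF b q]
          distribution_fun_truncate(2)[OF F, of "1 - \<delta>"] distribution_fun_truncate(1)[OF F, of "1 - \<delta>"]
          _ gap_mono _ _ B])
      (use b \<delta> in auto)
qed

lemma measure_Tulap_le_neighbour: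
  fixes k k' :: int
  assumes b: "0 < b" "b < 1" and \<delta>: "0 \<le> \<delta>"
    and q_def: "q = 2 * \<delta> * b / (1 - b + 2 * \<delta> * b)"
    and "\<bar>k - k'\<bar> \<le> 1" and B: "B \<in> sets borel"
  shows "measure (Tulap (of_int k) b q) B \<le> (1/b) * measure (Tulap (of_int k') b q) B + \<delta>"
proof -
  have q: "0 \<le> q" "q < 1"
    using tulap_q_bounds[OF b \<delta>(1) q_def] by simp_all
  have "0 \<le> measure (Tulap (of_int k') b q) B" "0 \<le> 1/b" using b by simp_all
  then have lower: "0 \<le> (1/b) * measure (Tulap (of_int k') b q) B" by simp
  consider "1 \<le> \<delta>" | "k' = k" | "\<delta> < 1" "k' = k + 1" | "\<delta> < 1" "k' = k - 1"
    using \<open>\<bar>k - k'\<bar> \<le> 1\<close> by linarith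
  then show ?thesis
  proof cases
    case 1
    have "measure (Tulap (of_int k) b q) B \<le> 1"
      unfolding Tulap_eq_interval_measure[OF b(1) q]
      by (rule measure_interval_measure_le_mass[OF distribution_fun_std_tulap_cdf[OF b q]])
    then show ?thesis using 1 lower by linarith
  next
    case 2
    have "1 \<le> 1/b" using b by simp
    then have "measure (Tulap (of_int k) b q) B \<le> (1/b) * measure (Tulap (of_int k) b q) B"
      using mult_right_mono[of 1 "1/b" "measure (Tulap (of_int k) b q) B"] by simp
    then show ?thesis using 2 \<delta> by simp
  next
    case 3
    then show ?thesis using measure_Tulap_le_succ[OF b \<delta> _ q_def B] by simp
  next
    case 4
    then show ?thesis using measure_Tulap_le_pred[OF b \<delta> _ q_def B] by simp
  qed
qed

lemma differentially_private_Tulap: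
  fixes T :: "'x list \<Rightarrow> int"
  assumes "\<epsilon> > 0" and "\<delta> \<ge> 0"
    and sensitivity: "\<And>X X'. length X = n \<Longrightarrow> length X' = n \<Longrightarrow> hamming X X' = 1
                               \<Longrightarrow> \<bar>T X - T X'\<bar> \<le> 1"
  shows "differentially_private n
           (\<lambda>X. Tulap (of_int (T X)) (exp (- \<epsilon>))
                  (2 * \<delta> * exp (- \<epsilon>) / (1 - exp (- \<epsilon>) + 2 * \<delta> * exp (- \<epsilon>))))
           \<epsilon> \<delta>"
proof -
  have b: "0 < exp (- \<epsilon>)" "exp (- \<epsilon>) < 1" using assms(1) by simp_all
  have "exp \<epsilon> = 1 / exp (- \<epsilon>)" by (simp add: exp_minus field_simps)
  moreover have sets_Tulap: "sets (Tulap m b' q) = sets borel" for m b' q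
    unfolding Tulap_def by simp
  ultimately show ?thesis
    unfolding differentially_private_def sets_Tulap
    using measure_Tulap_le_neighbour[OF b assms(2) refl sensitivity] by auto
qed

theorem theorem2:
  fixes \<epsilon> \<delta> :: real and n :: nat and T :: "'x list \<Rightarrow> int"
  assumes "\<epsilon> > 0" and "\<delta> \<ge> 0" and "n \<ge> 1"
    and "(SUP p \<in> {(X, X'). length X = n \<and> length X' = n \<and> hamming X X' = 1}.
            ereal (real_of_int \<bar>T (fst p) - T (snd p)\<bar>)) = 1"
  shows "differentially_private n
           (\<lambda>X. Tulap (real_of_int (T X)) (exp (- \<epsilon>))
                  (2 * \<delta> * exp (- \<epsilon>) / (1 - exp (- \<epsilon>) + 2 * \<delta> * exp (- \<epsilon>))))
           \<epsilon> \<delta>"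
proof (rule differentially_private_Tulap[OF assms(1,2)])
  fix X X' :: "'x list"
  assume "length X = n" "length X' = n" "hamming X X' = 1"
  then have "ereal (real_of_int \<bar>T X - T X'\<bar>) \<le> 1"
    by (subst assms(4)[symmetric], intro SUP_upper2[of "(X, X')"]) auto
  then show "\<bar>T X - T X'\<bar> \<le> 1" by simp
qed

end
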